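(* Let $\mathcal{G}\rightrightarrows M$ be a Lie groupoid and $x\in M$. Then $\mathcal{G}^x=t^{-1}(x)$ is paracompact.
   Context: A Lie groupoid $\mathcal{G}\rightrightarrows M$ consists of a smooth manifold $\mathcal{G}$ (possibly non-Hausdorff and non-second-countable), a Hausdorff second countable smooth manifold $M$, smooth target and source maps $t,s:\mathcal{G}\to M$, smooth unit and inversion maps, and smooth associative multiplication on $\{(g_1,g_2):s(g_1)=t(g_2)\}$ satisfying the groupoid axioms, such that $t$ is a submersion and every fiber $t^{-1}(x)$ is Hausdorff. *)

theory Defs
  imports "HOL-Analysis.Analysis"
begin

fun Ck_on :: "nat \<Rightarrow> ('a::euclidean_space \<Rightarrow> 'b::euclidean_space) \<Rightarrow> 'a set \<Rightarrow> bool" where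
  "Ck_on 0 f U = continuous_on U f"
| "Ck_on (Suc k) f U =
     (f differentiable_on U \<and> (\<forall>v. Ck_on k (\<lambda>x. frechet_derivative f (at x) v) U))"

definition smooth_on :: "('a::euclidean_space \<Rightarrow> 'b::euclidean_space) \<Rightarrow> 'a set \<Rightarrow> bool" where
  "smooth_on f U \<longleftrightarrow> (\<forall>k. Ck_on k f U)"

section \<open>Smooth manifolds (possibly non-Hausdorff, non-second-countable)\<close>

definition chart_in :: "'x topology \<Rightarrow> ('x set \<times> ('x \<Rightarrow> 'e::euclidean_space)) \<Rightarrow> bool" where
  "chart_in X c \<longleftrightarrow> (case c of (U, \<phi>) \<Rightarrow>
      openin X U \<and> open (\<phi> ` U) \<and> homeomorphic_map (subtopology X U) (top_of_set (\<phi> ` U)) \<phi>)"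

definition smooth_atlas :: "'x topology \<Rightarrow> ('x set \<times> ('x \<Rightarrow> 'e::euclidean_space)) set \<Rightarrow> bool" where
  "smooth_atlas X A \<longleftrightarrow>
     (\<forall>c\<in>A. chart_in X c) \<and> \<Union>(fst ` A) = topspace X \<and>
     (\<forall>(U, \<phi>)\<in>A. \<forall>(V, \<psi>)\<in>A. smooth_on (\<psi> \<circ> inv_into U \<phi>) (\<phi> ` (U \<inter> V)))"

definition smooth_map_on ::
  "'x topology \<Rightarrow> ('x set \<times> ('x \<Rightarrow> 'e::euclidean_space)) set \<Rightarrow> 'x set \<Rightarrow>
   'y topology \<Rightarrow> ('y set \<times> ('y \<Rightarrow> 'f::euclidean_space)) set \<Rightarrow> ('x \<Rightarrow> 'y) \<Rightarrow> bool" where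
  "smooth_map_on X A W Y B f \<longleftrightarrow>
     continuous_map (subtopology X W) Y f \<and>
     (\<forall>(U, \<phi>)\<in>A. \<forall>(V, \<psi>)\<in>B. smooth_on (\<psi> \<circ> f \<circ> inv_into U \<phi>) (\<phi> ` (U \<inter> W \<inter> f -` V)))"

definition smooth_map ::
  "'x topology \<Rightarrow> ('x set \<times> ('x \<Rightarrow> 'e::euclidean_space)) set \<Rightarrow>
   'y topology \<Rightarrow> ('y set \<times> ('y \<Rightarrow> 'f::euclidean_space)) set \<Rightarrow> ('x \<Rightarrow> 'y) \<Rightarrow> bool" where
  "smooth_map X A Y B f \<longleftrightarrow> smooth_map_on X A (topspace X) Y B f"

definition submersion ::
  "'x topology \<Rightarrow> ('x set \<times> ('x \<Rightarrow> 'e::euclidean_space)) set \<Rightarrow>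
   'y topology \<Rightarrow> ('y set \<times> ('y \<Rightarrow> 'f::euclidean_space)) set \<Rightarrow> ('x \<Rightarrow> 'y) \<Rightarrow> bool" where
  "submersion X A Y B f \<longleftrightarrow> smooth_map X A Y B f \<and>
     (\<forall>(U, \<phi>)\<in>A. \<forall>(V, \<psi>)\<in>B. \<forall>y\<in>\<phi> ` (U \<inter> f -` V).
        range (frechet_derivative (\<psi> \<circ> f \<circ> inv_into U \<phi>) (at y)) = UNIV)"

definition prod_atlas ::
  "('x set \<times> ('x \<Rightarrow> 'e::euclidean_space)) set \<Rightarrow> ('y set \<times> ('y \<Rightarrow> 'f::euclidean_space)) set \<Rightarrow>
   (('x \<times> 'y) set \<times> ('x \<times> 'y \<Rightarrow> 'e \<times> 'f)) set" where
  "prod_atlas A B = {(U \<times> V, \<lambda>(x, y). (\<phi> x, \<psi> y)) | U \<phi> V \<psi>. (U, \<phi>) \<in> A \<and> (V, \<psi>) \<in> B}"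

text \<open>Smoothness of a map defined only on a subset S of a manifold (used for the
  multiplication on the composable pairs, an embedded submanifold of G \<times> G):
  locally it is the restriction of a smooth map on an open set.\<close>
definition smooth_on_subset ::
  "'x topology \<Rightarrow> ('x set \<times> ('x \<Rightarrow> 'e::euclidean_space)) set \<Rightarrow> 'x set \<Rightarrow>
   'y topology \<Rightarrow> ('y set \<times> ('y \<Rightarrow> 'f::euclidean_space)) set \<Rightarrow> ('x \<Rightarrow> 'y) \<Rightarrow> bool" where
  "smooth_on_subset X A S Y B f \<longleftrightarrow>
     (\<forall>p\<in>S. \<exists>W F. openin X W \<and> p \<in> W \<and> smooth_map_on X A W Y B F \<and> (\<forall>q\<in>W \<inter> S. F q = f q))"

text \<open>G = topspace TG with smooth atlas AG, M = topspace TM with atlas AM;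
  target t, source s, unit u, inverse i, multiplication m (m g h defined when s g = t h).\<close>
definition lie_groupoid ::
  "'g topology \<Rightarrow> ('g set \<times> ('g \<Rightarrow> 'e::euclidean_space)) set \<Rightarrow>
   'm topology \<Rightarrow> ('m set \<times> ('m \<Rightarrow> 'f::euclidean_space)) set \<Rightarrow>
   ('g \<Rightarrow> 'm) \<Rightarrow> ('g \<Rightarrow> 'm) \<Rightarrow> ('m \<Rightarrow> 'g) \<Rightarrow> ('g \<Rightarrow> 'g) \<Rightarrow> ('g \<Rightarrow> 'g \<Rightarrow> 'g) \<Rightarrow> bool" where
  "lie_groupoid TG AG TM AM t s u i m \<longleftrightarrow>
     (let G = topspace TG; M = topspace TM;
          G2 = {(g, h). g \<in> G \<and> h \<in> G \<and> s g = t h} in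
     smooth_atlas TG AG \<and> smooth_atlas TM AM \<and>
     Hausdorff_space TM \<and> second_countable TM \<and>
     \<comment> \<open>algebraic groupoid axioms\<close>
     (\<forall>g\<in>G. t g \<in> M \<and> s g \<in> M) \<and>
     (\<forall>x\<in>M. u x \<in> G \<and> t (u x) = x \<and> s (u x) = x) \<and>
     (\<forall>g\<in>G. i g \<in> G \<and> s (i g) = t g \<and> t (i g) = s g) \<and>
     (\<forall>(g, h)\<in>G2. m g h \<in> G \<and> t (m g h) = t g \<and> s (m g h) = s h) \<and>
     (\<forall>g\<in>G. \<forall>h\<in>G. \<forall>k\<in>G. s g = t h \<and> s h = t k \<longrightarrow> m (m g h) k = m g (m h k)) \<and>
     (\<forall>g\<in>G. m (u (t g)) g = g \<and> m g (u (s g)) = g) \<and>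
     (\<forall>g\<in>G. m g (i g) = u (t g) \<and> m (i g) g = u (s g)) \<and>
     \<comment> \<open>smoothness\<close>
     submersion TG AG TM AM t \<and> smooth_map TG AG TM AM s \<and>
     smooth_map TM AM TG AG u \<and> smooth_map TG AG TG AG i \<and>
     smooth_on_subset (prod_topology TG TG) (prod_atlas AG AG) G2 TG AG (case_prod m) \<and>
     \<comment> \<open>target fibres are Hausdorff\<close>
     (\<forall>x\<in>M. Hausdorff_space (subtopology TG {g \<in> G. t g = x})))"

definition paracompact_space :: "'a topology \<Rightarrow> bool" where
  "paracompact_space X \<longleftrightarrow>
     (\<forall>\<U>. (\<forall>U\<in>\<U>. openin X U) \<and> topspace X \<subseteq> \<Union>\<U> \<longrightarrow>
        (\<exists>\<V>. (\<forall>V\<in>\<V>. openin X V) \<and> topspace X \<subseteq> \<Union>\<V> \<and>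
              (\<forall>V\<in>\<V>. \<exists>U\<in>\<U>. V \<subseteq> U) \<and> locally_finite_in X \<V>))"

end

theory Submission
  imports Defs
begin

text \<open>
  The target fibre \<open>G\<^sup>x\<close> is closed in the locally compact space of arrows and Hausdorff by
  assumption, hence regular. Since the base is Lindelof, there is a \<sigma>-compact set \<open>S\<close> of arrows,
  closed under inversion, whose interior contains every unit. Call \<open>g, h \<in> G\<^sup>x\<close> close if
  \<open>g\<^sup>-\<^sup>1 h \<in> S\<close>. The classes of the equivalence relation generated by closeness are open,
  because left translations are continuous, and \<sigma>-compact, because the arrows reached from \<open>g\<close>
  in \<open>n\<close> steps form \<open>g S \<cdots> S\<close>, a continuous image of a closed subset of a product of
  \<sigma>-compact sets. Thus \<open>G\<^sup>x\<close> is a disjoint union of open regular Lindelof pieces, each of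
  which is paracompact.
\<close>

section \<open>Paracompactness and \<sigma>-compactness\<close>

lemma regular_space_closure_of_refinement:
  assumes reg: "regular_space X" and "\<And>U. U \<in> \<U> \<Longrightarrow> openin X U" "topspace X \<subseteq> \<Union>\<U>"
  shows "topspace X \<subseteq> \<Union>{V. openin X V \<and> (\<exists>U\<in>\<U>. X closure_of V \<subseteq> U)}"
proof
  fix y assume "y \<in> topspace X"
  then obtain U where "U \<in> \<U>" "y \<in> U" using assms(3) by blast
  with reg assms(2) obtain V C where "openin X V" "closedin X C" "y \<in> V" "V \<subseteq> C" "C \<subseteq> U"
    unfolding neighbourhood_base_of_closedin [symmetric] neighbourhood_base_of by metis
  then have "X closure_of V \<subseteq> U" by (meson closure_of_minimal order_trans)
  with \<open>openin X V\<close> \<open>y \<in> V\<close> \<open>U \<in> \<U>\<close>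
  show "y \<in> \<Union>{V. openin X V \<and> (\<exists>U\<in>\<U>. X closure_of V \<subseteq> U)}" by blast
qed

text \<open>The classical shrinking of a countable cover: the neighbourhood \<open>G n\<close> meets only
  \<open>C 0, \<dots>, C n\<close>.\<close>

lemma locally_finite_in_shrinking:
  fixes G F C :: "nat \<Rightarrow> 'a set"
  assumes G: "\<And>n. openin X (G n)" and F: "\<And>n. openin X (F n)" "\<And>n. X closure_of G n \<subseteq> F n"
    and cover: "topspace X \<subseteq> (\<Union>n. G n)"
    and C_def: "\<And>n. C n = F n - (\<Union>m<n. X closure_of G m)"
  shows "openin X (C n)" "topspace X \<subseteq> (\<Union>n. C n)" "locally_finite_in X (range C)"
proof -
  have G_closure: "G n \<subseteq> X closure_of G n" for n
    by (simp add: G closure_of_subset openin_subset)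
  show "openin X (C n)"
    using F(1) unfolding C_def by (intro openin_diff closedin_Union) auto
  show "topspace X \<subseteq> (\<Union>n. C n)"
  proof
    fix y assume "y \<in> topspace X"
    then have "\<exists>n. y \<in> F n" using cover G_closure F(2) by blast
    define n where "n = (LEAST n. y \<in> F n)"
    have "y \<in> F n" unfolding n_def by (rule LeastI_ex) fact
    moreover have "y \<notin> X closure_of G m" if "m < n" for m
      using not_less_Least [OF that [unfolded n_def]] F(2) by blast
    ultimately show "y \<in> (\<Union>n. C n)" by (auto simp: C_def)
  qed
  show "locally_finite_in X (range C)"
    unfolding locally_finite_in_def
  proof (intro conjI ballI)
    show "\<Union>(range C) \<subseteq> topspace X"
      using F(1) openin_subset by (fastforce simp: C_def)
    fix y assume "y \<in> topspace X"
    then obtain n where "y \<in> G n" using cover by blast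
    have "{V \<in> range C. V \<inter> G n \<noteq> {}} \<subseteq> C ` {..n}"
      using G_closure by (fastforce simp: C_def not_le)
    then have "finite {V \<in> range C. V \<inter> G n \<noteq> {}}" by (rule finite_subset) simp
    with G \<open>y \<in> G n\<close> show "\<exists>W. openin X W \<and> y \<in> W \<and> finite {V \<in> range C. V \<inter> W \<noteq> {}}"
      by blast
  qed
qed

lemma regular_Lindelof_imp_paracompact_space:
  assumes reg: "regular_space X" and lin: "Lindelof_space X"
  shows "paracompact_space X"
  unfolding paracompact_space_def
proof (intro allI impI)
  fix \<U> assume "(\<forall>U\<in>\<U>. openin X U) \<and> topspace X \<subseteq> \<Union>\<U>"
  then have \<U>: "\<And>U. U \<in> \<U> \<Longrightarrow> openin X U" "topspace X \<subseteq> \<Union>\<U>" by auto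
  obtain \<G> where "countable \<G>" and \<G>: "\<G> \<subseteq> {V. openin X V \<and> (\<exists>U\<in>\<U>. X closure_of V \<subseteq> U)}"
    and cover: "topspace X \<subseteq> \<Union>\<G>"
    using lin regular_space_closure_of_refinement [OF reg \<U>] unfolding Lindelof_space_alt
    by (metis (no_types, lifting) mem_Collect_eq)
  show "\<exists>\<V>. (\<forall>V\<in>\<V>. openin X V) \<and> topspace X \<subseteq> \<Union>\<V> \<and> (\<forall>V\<in>\<V>. \<exists>U\<in>\<U>. V \<subseteq> U) \<and>
            locally_finite_in X \<V>"
  proof (cases "\<G> = {}")
    case True
    with cover show ?thesis by (intro exI [of _ "{}"]) (auto simp: locally_finite_in_def)
  next
    case False
    define G where "G = from_nat_into \<G>"
    have "G n \<in> \<G>" for n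
      unfolding G_def using False by (rule from_nat_into)
    with \<G> have G: "openin X (G n)" "\<exists>U\<in>\<U>. X closure_of G n \<subseteq> U" for n
      by auto
    then obtain F where F: "\<And>n. F n \<in> \<U>" "\<And>n. X closure_of G n \<subseteq> F n"
      by metis
    have "range G = \<G>" unfolding G_def by (rule range_from_nat_into) fact+
    with cover have G_cover: "topspace X \<subseteq> (\<Union>n. G n)" by simp
    define C where "C n = F n - (\<Union>m<n. X closure_of G m)" for n
    note shrinking = locally_finite_in_shrinking [OF G(1) \<U>(1) [OF F(1)] F(2) G_cover, where C = C]
    show ?thesis
    proof (intro exI [of _ "range C"] conjI)
      show "\<forall>V\<in>range C. openin X V" "topspace X \<subseteq> \<Union>(range C)" "locally_finite_in X (range C)"
        using shrinking by (auto simp: C_def)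
      show "\<forall>V\<in>range C. \<exists>U\<in>\<U>. V \<subseteq> U"
        using F(1) by (auto simp: C_def)
    qed
  qed
qed

lemma locally_finite_in_open_partition_Union:
  assumes disj: "pairwise disjnt \<P>" and cover: "topspace X \<subseteq> \<Union>\<P>"
    and opn: "\<And>P. P \<in> \<P> \<Longrightarrow> openin X P"
    and fin: "\<And>P. P \<in> \<P> \<Longrightarrow> locally_finite_in (subtopology X P) (\<V> P)"
  shows "locally_finite_in X (\<Union>P\<in>\<P>. \<V> P)"
  unfolding locally_finite_in_def
proof (intro conjI ballI)
  have "\<Union>(\<V> P) \<subseteq> P" if "P \<in> \<P>" for P
    using fin [OF that] by (auto simp: locally_finite_in_def)
  then show "\<Union>(\<Union>P\<in>\<P>. \<V> P) \<subseteq> topspace X"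
    using opn openin_subset by blast
  fix y assume "y \<in> topspace X"
  then obtain P where P: "P \<in> \<P>" "y \<in> P" using cover by blast
  moreover have "y \<in> topspace (subtopology X P)" using P(2) \<open>y \<in> topspace X\<close> by simp
  ultimately obtain W where W: "openin (subtopology X P) W" "y \<in> W" "finite {V \<in> \<V> P. V \<inter> W \<noteq> {}}"
    using fin unfolding locally_finite_in_def by meson
  have "W \<subseteq> P" using openin_imp_subset [OF W(1)] by simp
  have "{V \<in> (\<Union>P\<in>\<P>. \<V> P). V \<inter> W \<noteq> {}} \<subseteq> {V \<in> \<V> P. V \<inter> W \<noteq> {}}"
  proof clarify
    fix Q V assume "Q \<in> \<P>" "V \<in> \<V> Q" "V \<inter> W \<noteq> {}"
    with \<open>\<And>P. P \<in> \<P> \<Longrightarrow> \<Union>(\<V> P) \<subseteq> P\<close> \<open>W \<subseteq> P\<close> have "\<not> disjnt Q P"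
      by (fastforce simp: disjnt_def)
    with disj \<open>Q \<in> \<P>\<close> P(1) have "Q = P" by (meson pairwiseD)
    with \<open>V \<in> \<V> Q\<close> show "V \<in> \<V> P" by simp
  qed
  then have "finite {V \<in> (\<Union>P\<in>\<P>. \<V> P). V \<inter> W \<noteq> {}}" using W(3) by (rule finite_subset)
  moreover have "openin X W" using W(1) openin_open_subtopology [OF opn [OF P(1)]] by simp
  ultimately show "\<exists>W. openin X W \<and> y \<in> W \<and> finite {V \<in> (\<Union>P\<in>\<P>. \<V> P). V \<inter> W \<noteq> {}}"
    using W(2) by blast
qed

lemma paracompact_space_open_partition:
  assumes disj: "pairwise disjnt \<P>" and cover: "topspace X \<subseteq> \<Union>\<P>"
    and opn: "\<And>P. P \<in> \<P> \<Longrightarrow> openin X P"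
    and para: "\<And>P. P \<in> \<P> \<Longrightarrow> paracompact_space (subtopology X P)"
  shows "paracompact_space X"
  unfolding paracompact_space_def
proof (intro allI impI)
  fix \<U> assume "(\<forall>U\<in>\<U>. openin X U) \<and> topspace X \<subseteq> \<Union>\<U>"
  then have \<U>: "\<And>U. U \<in> \<U> \<Longrightarrow> openin X U" "topspace X \<subseteq> \<Union>\<U>" by auto
  have "\<exists>\<V>. (\<forall>V\<in>\<V>. openin X V \<and> (\<exists>U\<in>\<U>. V \<subseteq> U)) \<and> P \<subseteq> \<Union>\<V> \<and>
             locally_finite_in (subtopology X P) \<V>" if P: "P \<in> \<P>" for P
  proof -
    have top: "topspace (subtopology X P) = P"
      using opn [OF P] openin_subset by fastforce
    have "\<forall>W \<in> (\<lambda>U. P \<inter> U) ` \<U>. openin (subtopology X P) W"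
      using \<U>(1) openin_subtopology_Int2 by blast
    moreover have "topspace (subtopology X P) \<subseteq> \<Union>((\<lambda>U. P \<inter> U) ` \<U>)"
      using \<U>(2) top by auto
    ultimately obtain \<V> where \<V>: "\<forall>V\<in>\<V>. openin (subtopology X P) V" "P \<subseteq> \<Union>\<V>"
        "\<forall>V\<in>\<V>. \<exists>W\<in>(\<lambda>U. P \<inter> U) ` \<U>. V \<subseteq> W" "locally_finite_in (subtopology X P) \<V>"
      using para [OF P] unfolding paracompact_space_def top
      by (elim allE [where x="(\<lambda>U. P \<inter> U) ` \<U>"] impE) blast+
    then show ?thesis by (fastforce simp: openin_open_subtopology [OF opn [OF P]])
  qed
  then obtain \<V> where "\<forall>P\<in>\<P>. (\<forall>V\<in>\<V> P. openin X V \<and> (\<exists>U\<in>\<U>. V \<subseteq> U)) \<and>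
      P \<subseteq> \<Union>(\<V> P) \<and> locally_finite_in (subtopology X P) (\<V> P)"
    using bchoice [of \<P>] by (metis (no_types, lifting))
  then have \<V>: "\<And>P V. P \<in> \<P> \<Longrightarrow> V \<in> \<V> P \<Longrightarrow> openin X V \<and> (\<exists>U\<in>\<U>. V \<subseteq> U)"
      "\<And>P. P \<in> \<P> \<Longrightarrow> P \<subseteq> \<Union>(\<V> P)"
      "\<And>P. P \<in> \<P> \<Longrightarrow> locally_finite_in (subtopology X P) (\<V> P)"
    by auto
  show "\<exists>\<V>. (\<forall>V\<in>\<V>. openin X V) \<and> topspace X \<subseteq> \<Union>\<V> \<and> (\<forall>V\<in>\<V>. \<exists>U\<in>\<U>. V \<subseteq> U) \<and>
            locally_finite_in X \<V>"
  proof (intro exI [of _ "\<Union>P\<in>\<P>. \<V> P"] conjI ballI)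
    show "openin X V" "\<exists>U\<in>\<U>. V \<subseteq> U" if "V \<in> (\<Union>P\<in>\<P>. \<V> P)" for V
      using that \<V>(1) by blast+
    show "topspace X \<subseteq> \<Union>(\<Union>P\<in>\<P>. \<V> P)"
      using cover \<V>(2) by blast
    show "locally_finite_in X (\<Union>P\<in>\<P>. \<V> P)"
      using disj cover opn \<V>(3) by (rule locally_finite_in_open_partition_Union)
  qed
qed

definition sigma_compactin :: "'a topology \<Rightarrow> 'a set \<Rightarrow> bool" where
  "sigma_compactin X S \<longleftrightarrow> (\<exists>\<C>. countable \<C> \<and> (\<forall>C\<in>\<C>. compactin X C) \<and> \<Union>\<C> = S)"

lemma sigma_compactin_imp_Lindelof_space:
  assumes "sigma_compactin X S"
  shows "Lindelof_space (subtopology X S)"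
proof -
  obtain \<C> where "countable \<C>" "\<And>C. C \<in> \<C> \<Longrightarrow> compactin X C" "\<Union>\<C> = S"
    using assms unfolding sigma_compactin_def by blast
  then show ?thesis
    using Lindelof_space_Union compact_imp_Lindelof_space compact_space_subtopology by metis
qed

lemma sigma_compactin_subset_topspace: "sigma_compactin X S \<Longrightarrow> S \<subseteq> topspace X"
  unfolding sigma_compactin_def using compactin_subset_topspace by blast

lemma sigma_compactin_subtopology:
  "sigma_compactin (subtopology X T) S \<longleftrightarrow> sigma_compactin X S \<and> S \<subseteq> T"
  by (auto simp: sigma_compactin_def compactin_subtopology)

lemma sigma_compactin_Union:
  assumes "countable \<A>" and "\<And>A. A \<in> \<A> \<Longrightarrow> sigma_compactin X A"
  shows "sigma_compactin X (\<Union>\<A>)"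
proof -
  obtain \<C> where \<C>: "\<And>A. A \<in> \<A> \<Longrightarrow> countable (\<C> A) \<and> (\<forall>C\<in>\<C> A. compactin X C) \<and> \<Union>(\<C> A) = A"
    using assms(2) unfolding sigma_compactin_def by metis
  have "\<Union>(\<Union>(\<C> ` \<A>)) = (\<Union>A\<in>\<A>. \<Union>(\<C> A))" by blast
  also have "\<dots> = \<Union>\<A>" using \<C> by simp
  finally show ?thesis
    unfolding sigma_compactin_def using assms(1) \<C> by (intro exI[of _ "\<Union>(\<C> ` \<A>)"]) auto
qed

lemma sigma_compactin_Un:
  "sigma_compactin X A \<Longrightarrow> sigma_compactin X B \<Longrightarrow> sigma_compactin X (A \<union> B)"
  using sigma_compactin_Union[of "{A, B}" X] by auto

lemma sigma_compactin_Times: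
  assumes "sigma_compactin X A" and "sigma_compactin Y B"
  shows "sigma_compactin (prod_topology X Y) (A \<times> B)"
proof -
  obtain \<C> \<D> where "countable \<C>" "\<forall>C\<in>\<C>. compactin X C" "\<Union>\<C> = A"
    and "countable \<D>" "\<forall>D\<in>\<D>. compactin Y D" "\<Union>\<D> = B"
    using assms unfolding sigma_compactin_def by blast
  then show ?thesis
    unfolding sigma_compactin_def
    by (intro exI[of _ "(\<lambda>(C, D). C \<times> D) ` (\<C> \<times> \<D>)"]) (auto simp: compactin_Times)
qed

lemma sigma_compactin_Int_closedin:
  assumes "sigma_compactin X S" and "closedin X T"
  shows "sigma_compactin X (S \<inter> T)"
proof -
  obtain \<C> where "countable \<C>" "\<forall>C\<in>\<C>. compactin X C" "\<Union>\<C> = S"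
    using assms(1) unfolding sigma_compactin_def by blast
  with assms(2) show ?thesis
    unfolding sigma_compactin_def
    by (intro exI[of _ "(\<lambda>C. T \<inter> C) ` \<C>"]) (auto intro: closed_Int_compactin)
qed

lemma image_sigma_compactin:
  assumes "sigma_compactin X S" and "continuous_map X Y f"
  shows "sigma_compactin Y (f ` S)"
proof -
  obtain \<C> where "countable \<C>" "\<forall>C\<in>\<C>. compactin X C" "\<Union>\<C> = S"
    using assms(1) unfolding sigma_compactin_def by blast
  moreover have "f ` S = \<Union>((\<lambda>C. f ` C) ` \<C>)" unfolding \<open>\<Union>\<C> = S\<close>[symmetric] by (rule image_Union)
  moreover have "\<forall>D\<in>(\<lambda>C. f ` C) ` \<C>. compactin Y D"
    using \<open>\<forall>C\<in>\<C>. compactin X C\<close> image_compactin[OF _ assms(2)] by blast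
  ultimately show ?thesis
    unfolding sigma_compactin_def by (metis countable_image)
qed

section \<open>Topological groupoids\<close>

locale topological_groupoid =
  fixes TG :: "'g topology" and TM :: "'m topology"
    and t s :: "'g \<Rightarrow> 'm" and u :: "'m \<Rightarrow> 'g" and i :: "'g \<Rightarrow> 'g" and m :: "'g \<Rightarrow> 'g \<Rightarrow> 'g"
  assumes continuous_target: "continuous_map TG TM t"
    and continuous_source: "continuous_map TG TM s"
    and continuous_unit: "continuous_map TM TG u"
    and continuous_inverse: "continuous_map TG TG i"
    and continuous_mult: "continuous_map
      (subtopology (prod_topology TG TG) {(g, h). g \<in> topspace TG \<and> h \<in> topspace TG \<and> s g = t h})
      TG (case_prod m)"
    and target_unit: "y \<in> topspace TM \<Longrightarrow> t (u y) = y"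
    and source_unit: "y \<in> topspace TM \<Longrightarrow> s (u y) = y"
    and source_inverse: "g \<in> topspace TG \<Longrightarrow> s (i g) = t g"
    and target_inverse: "g \<in> topspace TG \<Longrightarrow> t (i g) = s g"
    and mult_in: "\<lbrakk>g \<in> topspace TG; h \<in> topspace TG; s g = t h\<rbrakk> \<Longrightarrow> m g h \<in> topspace TG"
    and target_mult: "\<lbrakk>g \<in> topspace TG; h \<in> topspace TG; s g = t h\<rbrakk> \<Longrightarrow> t (m g h) = t g"
    and source_mult: "\<lbrakk>g \<in> topspace TG; h \<in> topspace TG; s g = t h\<rbrakk> \<Longrightarrow> s (m g h) = s h"
    and mult_assoc: "\<lbrakk>g \<in> topspace TG; h \<in> topspace TG; k \<in> topspace TG; s g = t h; s h = t k\<rbrakk>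
      \<Longrightarrow> m (m g h) k = m g (m h k)"
    and mult_unit_left: "g \<in> topspace TG \<Longrightarrow> m (u (t g)) g = g"
    and mult_unit_right: "g \<in> topspace TG \<Longrightarrow> m g (u (s g)) = g"
    and mult_inverse_right: "g \<in> topspace TG \<Longrightarrow> m g (i g) = u (t g)"
    and mult_inverse_left: "g \<in> topspace TG \<Longrightarrow> m (i g) g = u (s g)"
begin

abbreviation "G \<equiv> topspace TG"
abbreviation "M \<equiv> topspace TM"
abbreviation "composable \<equiv> {(g, h). g \<in> G \<and> h \<in> G \<and> s g = t h}"
abbreviation "t_fibre x \<equiv> {g \<in> G. t g = x}"

lemma target_in [simp]: "g \<in> G \<Longrightarrow> t g \<in> M"
  using continuous_map_image_subset_topspace [OF continuous_target] by blast

lemma source_in [simp]: "g \<in> G \<Longrightarrow> s g \<in> M"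
  using continuous_map_image_subset_topspace [OF continuous_source] by blast

lemma unit_in [simp]: "y \<in> M \<Longrightarrow> u y \<in> G"
  using continuous_map_image_subset_topspace [OF continuous_unit] by blast

lemma inverse_in [simp]: "g \<in> G \<Longrightarrow> i g \<in> G"
  using continuous_map_image_subset_topspace [OF continuous_inverse] by blast

lemmas [simp] = target_unit source_unit source_inverse target_inverse mult_in target_mult source_mult

lemma inverse_unique:
  assumes "g \<in> G" "h \<in> G" "s g = t h" "m g h = u (t g)"
  shows "h = i g"
proof -
  have "i g = m (i g) (m g h)"
    using assms mult_unit_right [of "i g"] by simp
  also have "\<dots> = m (m (i g) g) h"
    using assms by (simp add: mult_assoc)
  also have "\<dots> = h"
    using assms by (simp add: mult_inverse_left mult_unit_left)
  finally show ?thesis by simp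
qed

lemma inverse_inverse [simp]: "g \<in> G \<Longrightarrow> i (i g) = g"
  by (rule inverse_unique [symmetric]) (simp_all add: mult_inverse_left)

lemma inverse_mult_cancel: "\<lbrakk>g \<in> G; h \<in> G; s g = t h\<rbrakk> \<Longrightarrow> m (i g) (m g h) = h"
  by (simp add: mult_assoc [symmetric] mult_inverse_left mult_unit_left)

lemma mult_inverse_cancel: "\<lbrakk>g \<in> G; h \<in> G; t g = t h\<rbrakk> \<Longrightarrow> m g (m (i g) h) = h"
  by (simp add: mult_assoc [symmetric] mult_inverse_right mult_unit_left)

lemma inverse_left_quotient:
  assumes "g \<in> G" "h \<in> G" "t g = t h"
  shows "i (m (i g) h) = m (i h) g"
proof -
  have "m (m (i g) h) (m (i h) g) = m (i g) (m h (m (i h) g))"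
    using assms by (simp add: mult_assoc)
  also have "\<dots> = u (s g)"
    using assms by (simp add: mult_inverse_cancel mult_inverse_left)
  finally show ?thesis
    using assms by (intro inverse_unique [symmetric]) auto
qed

lemma continuous_map_left_translation:
  assumes "g \<in> G"
  shows "continuous_map (subtopology TG (t_fibre (s g))) TG (m g)"
proof -
  have "continuous_map (subtopology TG (t_fibre (s g))) (subtopology (prod_topology TG TG) composable)
          (\<lambda>h. (g, h))"
    using assms by (auto simp: continuous_map_in_subtopology continuous_map_from_subtopology
        intro!: continuous_map_pairedI)
  from continuous_map_compose [OF this continuous_mult] show ?thesis
    by (simp add: o_def)
qed

lemma closedin_composable:
  assumes "Hausdorff_space TM"
  shows "closedin (prod_topology TG TG) composable"
proof -
  have "continuous_map (prod_topology TG TG) (prod_topology TM TM) (\<lambda>p. (s (fst p), t (snd p)))"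
    by (intro continuous_map_pairedI continuous_map_compose [OF continuous_map_fst continuous_source,
          unfolded o_def] continuous_map_compose [OF continuous_map_snd continuous_target, unfolded o_def])
  moreover have "closedin (prod_topology TM TM) ((\<lambda>y. (y, y)) ` M)"
    using assms Hausdorff_space_closedin_diagonal by blast
  ultimately have "closedin (prod_topology TG TG)
      {p \<in> topspace (prod_topology TG TG). (s (fst p), t (snd p)) \<in> (\<lambda>y. (y, y)) ` M}"
    by (rule closedin_continuous_map_preimage)
  moreover have "{p \<in> topspace (prod_topology TG TG). (s (fst p), t (snd p)) \<in> (\<lambda>y. (y, y)) ` M} =
      composable"
    by auto
  ultimately show ?thesis by simp
qed

definition set_mult :: "'g set \<Rightarrow> 'g set \<Rightarrow> 'g set" where
  "set_mult A B = case_prod m ` (A \<times> B \<inter> composable)"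

lemma sigma_compactin_set_mult:
  assumes "Hausdorff_space TM" "sigma_compactin TG A" "sigma_compactin TG B"
  shows "sigma_compactin TG (set_mult A B)"
proof -
  have "sigma_compactin (prod_topology TG TG) (A \<times> B \<inter> composable)"
    using assms by (intro sigma_compactin_Int_closedin sigma_compactin_Times closedin_composable)
  then have "sigma_compactin (subtopology (prod_topology TG TG) composable) (A \<times> B \<inter> composable)"
    by (simp add: sigma_compactin_subtopology)
  then show ?thesis
    unfolding set_mult_def by (rule image_sigma_compactin [OF _ continuous_mult])
qed

lemma exists_sigma_compact_unit_nbhd:
  assumes "locally_compact_space TG" "Lindelof_space TM"
  obtains S where "sigma_compactin TG S" "i ` S \<subseteq> S" "u ` M \<subseteq> TG interior_of S"
proof -
  have "\<exists>N K. openin TG N \<and> compactin TG K \<and> u y \<in> N \<and> N \<subseteq> K" if "y \<in> M" for y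
    using assms(1) that unfolding locally_compact_space_def by simp
  then obtain N K where NK: "\<And>y. y \<in> M \<Longrightarrow> openin TG (N y) \<and> compactin TG (K y) \<and> u y \<in> N y \<and> N y \<subseteq> K y"
    by metis
  have "\<forall>V\<in>(\<lambda>y. {z \<in> M. u z \<in> N y}) ` M. openin TM V"
    using NK openin_continuous_map_preimage [OF continuous_unit] by blast
  moreover have "M \<subseteq> \<Union>((\<lambda>y. {z \<in> M. u z \<in> N y}) ` M)"
    using NK by blast
  ultimately obtain \<V> where \<V>: "countable \<V>" "\<V> \<subseteq> (\<lambda>y. {z \<in> M. u z \<in> N y}) ` M" "M \<subseteq> \<Union>\<V>"
    using assms(2) unfolding Lindelof_space_alt by meson
  then obtain Z where Z: "countable Z" "Z \<subseteq> M" "\<V> = (\<lambda>y. {z \<in> M. u z \<in> N y}) ` Z"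
    using countable_subset_image [of \<V> "\<lambda>y. {z \<in> M. u z \<in> N y}" M] by blast
  with \<V>(3) have Z_cover: "M \<subseteq> (\<Union>z\<in>Z. {y \<in> M. u y \<in> N z})" by simp
  define S where "S = (\<Union>z\<in>Z. K z)"
  have S: "sigma_compactin TG S"
    unfolding sigma_compactin_def S_def using Z NK by blast
  show ?thesis
  proof (rule that [of "S \<union> i ` S"])
    show "sigma_compactin TG (S \<union> i ` S)"
      by (intro sigma_compactin_Un S image_sigma_compactin [OF S continuous_inverse])
    show "i ` (S \<union> i ` S) \<subseteq> S \<union> i ` S"
      using sigma_compactin_subset_topspace [OF S] by auto
    show "u ` M \<subseteq> TG interior_of (S \<union> i ` S)"
    proof clarify
      fix y assume "y \<in> M"
      then obtain z where "z \<in> Z" "u y \<in> N z" using Z_cover by blast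
      moreover have "N z \<subseteq> TG interior_of (S \<union> i ` S)"
        using NK \<open>z \<in> Z\<close> Z(2) by (intro interior_of_maximal) (auto simp: S_def)
      ultimately show "u y \<in> TG interior_of (S \<union> i ` S)" by blast
    qed
  qed
qed

end

locale groupoid_with_unit_nbhd = topological_groupoid TG TM t s u i m
  for TG :: "'g topology" and TM :: "'m topology" and t s u i m +
  fixes S :: "'g set"
  assumes Hausdorff_base: "Hausdorff_space TM"
    and sigma_compactin_nbhd: "sigma_compactin TG S"
    and inverse_nbhd: "i ` S \<subseteq> S"
    and units_interior_nbhd: "u ` M \<subseteq> TG interior_of S"
begin

definition close_rel :: "'m \<Rightarrow> ('g \<times> 'g) set" where
  "close_rel x = {(g, h). g \<in> t_fibre x \<and> h \<in> t_fibre x \<and> m (i g) h \<in> S}"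

lemma close_rel_refl: "g \<in> t_fibre x \<Longrightarrow> (g, g) \<in> close_rel x"
  using units_interior_nbhd interior_of_subset by (fastforce simp: close_rel_def mult_inverse_left)

lemma sym_close_rel: "sym (close_rel x)"
proof (rule symI)
  fix g h assume "(g, h) \<in> close_rel x"
  then have "g \<in> t_fibre x" "h \<in> t_fibre x" "i (m (i g) h) \<in> S"
    using inverse_nbhd by (auto simp: close_rel_def)
  then show "(h, g) \<in> close_rel x"
    by (simp add: close_rel_def inverse_left_quotient)
qed

lemma trancl_close_rel_subset: "(close_rel x)\<^sup>+ \<subseteq> t_fibre x \<times> t_fibre x"
  by (rule trancl_subset_Sigma) (auto simp: close_rel_def)

lemma equiv_close_rel_trancl: "equiv (t_fibre x) ((close_rel x)\<^sup>+)"
proof (rule equivI)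
  show "(close_rel x)\<^sup>+ \<subseteq> t_fibre x \<times> t_fibre x"
    by (rule trancl_close_rel_subset)
  then show "refl_on (t_fibre x) ((close_rel x)\<^sup>+)"
    using close_rel_refl by (auto intro: refl_onI)
qed (simp_all add: sym_trancl sym_close_rel)

lemma Image_close_rel:
  assumes "A \<subseteq> t_fibre x"
  shows "close_rel x `` A = set_mult A S"
proof
  show "close_rel x `` A \<subseteq> set_mult A S"
  proof clarify
    fix g h assume "g \<in> A" "(g, h) \<in> close_rel x"
    with assms have "g \<in> G" "h \<in> G" "t g = t h" "m (i g) h \<in> S"
      by (auto simp: close_rel_def)
    then have "(g, m (i g) h) \<in> A \<times> S \<inter> composable" "h = case_prod m (g, m (i g) h)"
      using \<open>g \<in> A\<close> by (simp_all add: mult_inverse_cancel)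
    then show "h \<in> set_mult A S"
      unfolding set_mult_def by (rule rev_image_eqI)
  qed
  show "set_mult A S \<subseteq> close_rel x `` A"
    unfolding set_mult_def
  proof clarify
    fix g k assume "g \<in> A" "k \<in> S" "g \<in> G" "k \<in> G" "s g = t k"
    with assms have "(g, m g k) \<in> close_rel x"
      by (auto simp: close_rel_def inverse_mult_cancel)
    with \<open>g \<in> A\<close> show "m g k \<in> close_rel x `` A" by blast
  qed
qed

lemma close_rel_relpow_Image_subset:
  assumes "g \<in> t_fibre x"
  shows "(close_rel x ^^ n) `` {g} \<subseteq> t_fibre x"
  using assms by (cases n) (auto simp: relcomp_Image close_rel_def)

lemma sigma_compactin_close_rel_relpow_Image:
  assumes "g \<in> t_fibre x"
  shows "sigma_compactin TG ((close_rel x ^^ n) `` {g})"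
proof (induction n)
  case 0
  show ?case
    using assms by (auto simp: sigma_compactin_def intro!: exI [of _ "{{g}}"])
next
  case (Suc n)
  have "(close_rel x ^^ Suc n) `` {g} = close_rel x `` ((close_rel x ^^ n) `` {g})"
    by (simp add: relcomp_Image)
  also have "\<dots> = set_mult ((close_rel x ^^ n) `` {g}) S"
    using close_rel_relpow_Image_subset [OF assms] by (rule Image_close_rel)
  finally show ?case
    using sigma_compactin_set_mult [OF Hausdorff_base Suc.IH sigma_compactin_nbhd] by simp
qed

lemma sigma_compactin_close_rel_class:
  assumes "g \<in> t_fibre x"
  shows "sigma_compactin TG ((close_rel x)\<^sup>+ `` {g})"
proof -
  have "(close_rel x)\<^sup>+ `` {g} = (close_rel x)\<^sup>* `` {g}"
    using close_rel_refl [OF assms] by (auto intro: rtrancl_into_trancl2 trancl_into_rtrancl)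
  also have "\<dots> = \<Union>(range (\<lambda>n. (close_rel x ^^ n) `` {g}))"
    by (auto simp: rtrancl_is_UN_relpow)
  finally show ?thesis
    using sigma_compactin_close_rel_relpow_Image [OF assms] by (auto intro: sigma_compactin_Union)
qed

lemma openin_close_rel_class:
  assumes "g \<in> t_fibre x"
  shows "openin (subtopology TG (t_fibre x)) ((close_rel x)\<^sup>+ `` {g})"
proof (subst openin_subopen, intro ballI)
  fix h assume "h \<in> (close_rel x)\<^sup>+ `` {g}"
  then have gh: "(g, h) \<in> (close_rel x)\<^sup>+" by simp
  then have h: "h \<in> t_fibre x" using trancl_close_rel_subset by blast
  define W where "W = {h' \<in> t_fibre x. m (i h) h' \<in> TG interior_of S}"
  have "continuous_map (subtopology TG (t_fibre x)) TG (m (i h))"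
    using continuous_map_left_translation [of "i h"] h by simp
  then have "openin (subtopology TG (t_fibre x)) W"
    using openin_continuous_map_preimage [OF _ openin_interior_of] by (force simp: W_def)
  moreover have "h \<in> W"
    using h units_interior_nbhd by (auto simp: W_def mult_inverse_left)
  moreover have "W \<subseteq> (close_rel x)\<^sup>+ `` {g}"
  proof
    fix h' assume "h' \<in> W"
    then have "(h, h') \<in> close_rel x"
      using h interior_of_subset [of TG S] by (auto simp: W_def close_rel_def)
    with gh show "h' \<in> (close_rel x)\<^sup>+ `` {g}" by (auto intro: trancl_into_trancl)
  qed
  ultimately show "\<exists>T. openin (subtopology TG (t_fibre x)) T \<and> h \<in> T \<and> T \<subseteq> (close_rel x)\<^sup>+ `` {g}"
    by blast
qed

lemma t_fibre_open_sigma_compact_partition: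
  obtains \<P> where "pairwise disjnt \<P>" "\<Union>\<P> = t_fibre x"
    "\<And>P. P \<in> \<P> \<Longrightarrow> openin (subtopology TG (t_fibre x)) P"
    "\<And>P. P \<in> \<P> \<Longrightarrow> sigma_compactin TG P"
proof (rule that [of "t_fibre x // (close_rel x)\<^sup>+"])
  show "pairwise disjnt (t_fibre x // (close_rel x)\<^sup>+)"
    using quotient_disj [OF equiv_close_rel_trancl] unfolding pairwise_def disjnt_def by blast
  show "\<Union>(t_fibre x // (close_rel x)\<^sup>+) = t_fibre x"
    by (rule Union_quotient [OF equiv_close_rel_trancl])
  show "openin (subtopology TG (t_fibre x)) P" if "P \<in> t_fibre x // (close_rel x)\<^sup>+" for P
    using that by (auto elim!: quotientE intro: openin_close_rel_class)
  show "sigma_compactin TG P" if "P \<in> t_fibre x // (close_rel x)\<^sup>+" for P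
    using that by (auto elim!: quotientE intro: sigma_compactin_close_rel_class)
qed

end

context topological_groupoid
begin

theorem paracompact_space_t_fibre:
  assumes lc: "locally_compact_space TG" and HM: "Hausdorff_space TM" and "Lindelof_space TM"
    and x: "x \<in> M" and Hx: "Hausdorff_space (subtopology TG (t_fibre x))"
  shows "paracompact_space (subtopology TG (t_fibre x))"
proof -
  obtain S where "sigma_compactin TG S" "i ` S \<subseteq> S" "u ` M \<subseteq> TG interior_of S"
    using exists_sigma_compact_unit_nbhd lc \<open>Lindelof_space TM\<close> by blast
  with HM interpret groupoid_with_unit_nbhd TG TM t s u i m S
    by (intro groupoid_with_unit_nbhd.intro topological_groupoid_axioms
        groupoid_with_unit_nbhd_axioms.intro)
  obtain \<P> where \<P>: "pairwise disjnt \<P>" "\<Union>\<P> = t_fibre x"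
    "\<And>P. P \<in> \<P> \<Longrightarrow> openin (subtopology TG (t_fibre x)) P" "\<And>P. P \<in> \<P> \<Longrightarrow> sigma_compactin TG P"
    using t_fibre_open_sigma_compact_partition [of x] by blast
  have "closedin TG (t_fibre x)"
    using closedin_continuous_map_preimage [OF continuous_target
        closedin_t1_singleton [OF Hausdorff_imp_t1_space [OF HM] x]] by simp
  with lc Hx have reg: "regular_space (subtopology TG (t_fibre x))"
    by (blast intro: locally_compact_Hausdorff_imp_regular_space locally_compact_space_closed_subset)
  show ?thesis
  proof (rule paracompact_space_open_partition [OF \<P>(1)])
    show "topspace (subtopology TG (t_fibre x)) \<subseteq> \<Union>\<P>"
      using \<P>(2) by simp
    fix P assume "P \<in> \<P>"
    then show "openin (subtopology TG (t_fibre x)) P" by (rule \<P>(3))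
    have "P \<subseteq> t_fibre x" using \<P>(2) \<open>P \<in> \<P>\<close> by blast
    then have "Lindelof_space (subtopology (subtopology TG (t_fibre x)) P)"
      using sigma_compactin_imp_Lindelof_space [OF \<P>(4) [OF \<open>P \<in> \<P>\<close>]]
      by (simp add: subtopology_subtopology Int_absorb1)
    with regular_space_subtopology [OF reg]
    show "paracompact_space (subtopology (subtopology TG (t_fibre x)) P)"
      by (rule regular_Lindelof_imp_paracompact_space)
  qed
qed

end

section \<open>Lie groupoids\<close>

lemma smooth_map_imp_continuous_map: "smooth_map X A Y B f \<Longrightarrow> continuous_map X Y f"
  by (simp add: smooth_map_def smooth_map_on_def)

lemma smooth_on_subset_imp_continuous_map:
  assumes smooth: "smooth_on_subset X A S Y B f"
  shows "continuous_map (subtopology X S) Y f"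
proof -
  obtain W F where WF: "\<And>p. p \<in> S \<Longrightarrow> openin X (W p) \<and> p \<in> W p \<and>
      smooth_map_on X A (W p) Y B (F p) \<and> (\<forall>q\<in>W p \<inter> S. F p q = f q)"
    using smooth unfolding smooth_on_subset_def by metis
  have local_cont: "continuous_map (subtopology (subtopology X S) (S \<inter> W p)) Y f" if "p \<in> S" for p
  proof -
    have "continuous_map (subtopology X (W p)) Y (F p)"
      using WF [OF that] by (simp add: smooth_map_on_def)
    then have "continuous_map (subtopology X (S \<inter> W p)) Y (F p)"
      by (metis continuous_map_from_subtopology inf_commute subtopology_subtopology)
    then have "continuous_map (subtopology X (S \<inter> W p)) Y f"
      by (rule continuous_map_eq) (use WF [OF that] in auto)
    then show ?thesis
      by (simp add: subtopology_subtopology)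
  qed
  show ?thesis
    by (rule pasting_lemma [where I = S and T = "\<lambda>p. S \<inter> W p" and f = "\<lambda>_. f"])
       (use WF local_cont in \<open>auto intro: openin_subtopology_Int2\<close>)
qed

lemma locally_compact_space_of_smooth_atlas:
  fixes A :: "('x set \<times> ('x \<Rightarrow> 'e::euclidean_space)) set"
  assumes "smooth_atlas X A"
  shows "locally_compact_space X"
  unfolding locally_compact_space_def
proof
  fix g assume g: "g \<in> topspace X"
  have charts: "\<forall>c\<in>A. chart_in X c" and cover: "\<Union>(fst ` A) = topspace X"
    using assms unfolding smooth_atlas_def by auto
  with g obtain c where "c \<in> A" "g \<in> fst c"
    by blast
  then obtain U \<phi> where "(U, \<phi>) \<in> A" "g \<in> U"
    by (metis prod.collapse)
  then have U: "openin X U" "open (\<phi> ` U)" "homeomorphic_map (subtopology X U) (top_of_set (\<phi> ` U)) \<phi>"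
    using charts unfolding chart_in_def by auto
  have "locally_compact_space (top_of_set (\<phi> ` U))"
    using U(2) by (intro locally_compact_space_open_subset) (auto intro: locally_compact_space_euclidean)
  moreover have "subtopology X U homeomorphic_space top_of_set (\<phi> ` U)"
    unfolding homeomorphic_space using U(3) by blast
  ultimately have "locally_compact_space (subtopology X U)"
    by (simp add: homeomorphic_locally_compact_space)
  moreover have "g \<in> topspace (subtopology X U)"
    using g \<open>g \<in> U\<close> by simp
  ultimately obtain V K where "openin (subtopology X U) V" "compactin (subtopology X U) K" "g \<in> V" "V \<subseteq> K"
    unfolding locally_compact_space_def by meson
  then have "openin X V" "compactin X K" "g \<in> V" "V \<subseteq> K"
    by (simp_all add: openin_open_subtopology [OF U(1)] compactin_subtopology)
  then show "\<exists>V K. openin X V \<and> compactin X K \<and> g \<in> V \<and> V \<subseteq> K"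
    by blast
qed

lemma lie_groupoid_imp_topological_groupoid:
  assumes "lie_groupoid TG AG TM AM t s u i m"
  shows "topological_groupoid TG TM t s u i m"
proof -
  note L = assms [unfolded lie_groupoid_def Let_def]
  then have smooth: "submersion TG AG TM AM t" "smooth_map TG AG TM AM s" "smooth_map TM AM TG AG u"
      "smooth_map TG AG TG AG i"
      "smooth_on_subset (prod_topology TG TG) (prod_atlas AG AG)
         {(g, h). g \<in> topspace TG \<and> h \<in> topspace TG \<and> s g = t h} TG AG (case_prod m)"
    by blast+
  show ?thesis
  proof unfold_locales
    show "continuous_map TG TM t"
      using smooth(1) unfolding submersion_def by (blast intro: smooth_map_imp_continuous_map)
    show "continuous_map TG TM s" "continuous_map TM TG u" "continuous_map TG TG i"
      using smooth(2-4) by (simp_all add: smooth_map_imp_continuous_map)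
    show "continuous_map (subtopology (prod_topology TG TG)
        {(g, h). g \<in> topspace TG \<and> h \<in> topspace TG \<and> s g = t h}) TG (case_prod m)"
      using smooth(5) by (rule smooth_on_subset_imp_continuous_map)
  qed (use L in auto)
qed

theorem lemma13p1:
  fixes TG :: "'g topology" and AG :: "('g set \<times> ('g \<Rightarrow> 'e::euclidean_space)) set"
    and TM :: "'m topology" and AM :: "('m set \<times> ('m \<Rightarrow> 'f::euclidean_space)) set"
    and t s :: "'g \<Rightarrow> 'm" and u :: "'m \<Rightarrow> 'g" and i :: "'g \<Rightarrow> 'g" and m :: "'g \<Rightarrow> 'g \<Rightarrow> 'g"
    and x :: 'm
  assumes "lie_groupoid TG AG TM AM t s u i m"
    and "x \<in> topspace TM"
  shows "paracompact_space (subtopology TG {g \<in> topspace TG. t g = x})"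
proof -
  note L = assms(1) [unfolded lie_groupoid_def Let_def]
  interpret topological_groupoid TG TM t s u i m
    using assms(1) by (rule lie_groupoid_imp_topological_groupoid)
  show ?thesis
  proof (rule paracompact_space_t_fibre)
    show "locally_compact_space TG"
      using L by (blast intro: locally_compact_space_of_smooth_atlas)
    show "Lindelof_space TM"
      using L by (blast intro: second_countable_imp_Lindelof_space)
  qed (use L assms(2) in auto)
qed

end
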